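(* Fix a time $t$, a horizon step $h\in\{1,\dots,H\}$, $\overline{\delta}\in(0,1)$ and $\alpha\in[0,1]$. Suppose $M_t$ obstacles are partitioned into a set $S_1$ of $M^1$ obstacles assigned to prediction model $P^1$ and a set $S_2$ of $M^2=M_t-M^1$ obstacles assigned to prediction model $P^2$. For each obstacle $k$ let $Y_k[t+h]\in\mathbb{R}^n$ be its (random) true position at time $t+h$, $\hat{Y}_k^{\phi(t,k)}[t+h\mid t]$ its predicted position under its assigned model $P^{\phi(t,k)}$, and $\epsilon^{\phi(t,k)}[t+h\mid t]>0$ the associated conformal radius; let $A_k=\{\|Y_k[t+h]-\hat{Y}_k^{\phi(t,k)}[t+h\mid t]\|\le \epsilon^{\phi(t,k)}[t+h\mid t]\}$ and suppose $\mathbb{P}(A_k)\ge 1-\overline{\delta}$ for every $k$. Assume the obstacles are non-interacting, i.e. the events $A_k$ ($k\in S_1\cup S_2$) are mutually independent. Let $X_k$ be the indicator of $A_k$. Then $$\mathbb{P}\Big(\bigcap_{k\in S_1}\{X_k=1\}\ \cap\ \Big\{\sum_{k\in S_2}X_k\ge \alpha M^2\Big\}\Big)\ \ge\ (1-\overline{\delta})^{M^1}\sum_{j=\lceil \alpha M^2\rceil}^{M^2}\binom{M^2}{j}(1-\overline{\delta})^j\,\overline{\delta}^{\,M^2-j}.$$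
   Context: An agent predicts the future trajectories of local obstacles using two prediction models $P^1$ (more accurate, slower) and $P^2$ (less accurate, faster); a routing function $\phi$ assigns each obstacle $k$ one of them, and the model outputs a predicted position $\hat{Y}_k^{\phi(t,k)}[t+h\mid t]$. The conformal radius is a positive number computed from calibration data. The parameter $\alpha$ is a "partial coverage" rate: only a fraction $\alpha$ of the $P^2$-routed obstacles is required to lie within their conformal radius. "Non-interacting obstacles" is used in the paper to mean that the coverage events of different obstacles are independent. *)

theory Defs
  imports "HOL-Probability.Probability"
begin

definition cover_event :: "'a measure \<Rightarrow> ('a \<Rightarrow> 'b::real_normed_vector) \<Rightarrow> 'b \<Rightarrow> real \<Rightarrow> 'a set" where
  "cover_event M Y Yhat eps = {\<omega> \<in> space M. norm (Y \<omega> - Yhat) \<le> eps}"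

end

(*
  The event in question is the disjoint union, over the subsets T of S2 with at least
  ceil(alpha * card S2) elements, of the events "among the coverage events indexed by
  S1 \<union> S2, exactly those indexed by S1 \<union> T occur". By independence its probability is
  the product of the coverage probabilities p k over S1 times the Poisson-binomial tail
  of (p k) over S2. Splitting off one index shows that this tail is affine in each p k
  with a nonnegative slope (the tail is antitone in the threshold), so lowering every
  p k to 1 - delta can only decrease it, and for equal probabilities it is the binomial tail.
*)
theory Submission
  imports Defs
begin

definition poisson_binomial_tail :: "'i set \<Rightarrow> ('i \<Rightarrow> real) \<Rightarrow> nat \<Rightarrow> real" where
  "poisson_binomial_tail S p r =
     (\<Sum>T | T \<subseteq> S \<and> r \<le> card T. (\<Prod>k\<in>T. p k) * (\<Prod>k\<in>S - T. 1 - p k))"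

lemma subsets_insert_card_ge:
  assumes "finite S" and "a \<notin> S"
  shows "{T. T \<subseteq> insert a S \<and> r \<le> card T} =
     {T. T \<subseteq> S \<and> r \<le> card T} \<union> insert a ` {T. T \<subseteq> S \<and> r - 1 \<le> card T}"
proof -
  have "card (insert a U) = Suc (card U)" if "U \<subseteq> S" for U
    using that assms finite_subset by (subst card_insert_disjoint) auto
  moreover have "{T. T \<subseteq> insert a S \<and> r \<le> card T} = {T \<in> Pow S \<union> insert a ` Pow S. r \<le> card T}"
    by (auto simp: Pow_insert[symmetric])
  ultimately show ?thesis
    by force
qed

lemma poisson_binomial_tail_insert:
  assumes "finite S" and "a \<notin> S"
  shows "poisson_binomial_tail (insert a S) p r
           = (1 - p a) * poisson_binomial_tail S p r + p a * poisson_binomial_tail S p (r - 1)"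
proof -
  let ?w = "\<lambda>T. (\<Prod>k\<in>T. p k) * (\<Prod>k\<in>insert a S - T. 1 - p k)"
  have without_a: "(\<Sum>T | T \<subseteq> S \<and> r \<le> card T. ?w T) = (1 - p a) * poisson_binomial_tail S p r"
    unfolding poisson_binomial_tail_def sum_distrib_left
  proof (rule sum.cong[OF refl])
    fix T assume "T \<in> {T. T \<subseteq> S \<and> r \<le> card T}"
    then have "insert a S - T = insert a (S - T)" and "a \<notin> S - T"
      using assms(2) by auto
    then show "?w T = (1 - p a) * ((\<Prod>k\<in>T. p k) * (\<Prod>k\<in>S - T. 1 - p k))"
      using assms(1) by simp
  qed
  have inj: "inj_on (insert a) {T. T \<subseteq> S \<and> r - 1 \<le> card T}"
    using assms(2) by (intro inj_onI) (metis Diff_insert_absorb mem_Collect_eq subsetD)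
  have with_a: "(\<Sum>T \<in> insert a ` {T. T \<subseteq> S \<and> r - 1 \<le> card T}. ?w T)
                  = p a * poisson_binomial_tail S p (r - 1)"
    unfolding poisson_binomial_tail_def sum_distrib_left sum.reindex[OF inj] o_def
  proof (rule sum.cong[OF refl])
    fix T assume "T \<in> {T. T \<subseteq> S \<and> r - 1 \<le> card T}"
    then have "insert a S - insert a T = S - T" and "a \<notin> T" and "finite T"
      using assms finite_subset by auto
    then show "?w (insert a T) = p a * ((\<Prod>k\<in>T. p k) * (\<Prod>k\<in>S - T. 1 - p k))"
      by simp
  qed
  have "poisson_binomial_tail (insert a S) p r
          = (\<Sum>T | T \<subseteq> S \<and> r \<le> card T. ?w T)
            + (\<Sum>T \<in> insert a ` {T. T \<subseteq> S \<and> r - 1 \<le> card T}. ?w T)"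
    unfolding poisson_binomial_tail_def subsets_insert_card_ge[OF assms]
    using assms by (intro sum.union_disjoint) auto
  then show ?thesis
    unfolding without_a with_a .
qed

lemma poisson_binomial_tail_nonneg:
  assumes "\<And>k. k \<in> S \<Longrightarrow> 0 \<le> p k \<and> p k \<le> 1"
  shows "0 \<le> poisson_binomial_tail S p r"
  unfolding poisson_binomial_tail_def
  using assms by (intro sum_nonneg mult_nonneg_nonneg prod_nonneg) auto

lemma poisson_binomial_tail_antimono:
  assumes "finite S" and "\<And>k. k \<in> S \<Longrightarrow> 0 \<le> p k \<and> p k \<le> 1" and "r' \<le> r"
  shows "poisson_binomial_tail S p r \<le> poisson_binomial_tail S p r'"
  unfolding poisson_binomial_tail_def
  using assms by (intro sum_mono2 mult_nonneg_nonneg prod_nonneg) auto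

lemma poisson_binomial_tail_mono:
  assumes "finite S" and "\<And>k. k \<in> S \<Longrightarrow> 0 \<le> q k \<and> q k \<le> p k \<and> p k \<le> 1"
  shows "poisson_binomial_tail S q r \<le> poisson_binomial_tail S p r"
  using assms
proof (induction S arbitrary: r rule: finite_induct)
  case empty
  then show ?case by (simp add: poisson_binomial_tail_def)
next
  case (insert a S)
  let ?P = "poisson_binomial_tail S p" and ?Q = "poisson_binomial_tail S q"
  have bounds_S: "\<And>k. k \<in> S \<Longrightarrow> 0 \<le> q k \<and> q k \<le> p k \<and> p k \<le> 1"
    and bounds_a: "0 \<le> q a" "q a \<le> p a" "p a \<le> 1"
    using insert.prems by simp_all
  have antimono: "?P r \<le> ?P (r - 1)"
    using bounds_S by (intro poisson_binomial_tail_antimono[OF insert.hyps(1)]) (auto intro: order_trans)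
  have "poisson_binomial_tail (insert a S) q r = (1 - q a) * ?Q r + q a * ?Q (r - 1)"
    using poisson_binomial_tail_insert[OF insert.hyps] .
  also have "\<dots> \<le> (1 - q a) * ?P r + q a * ?P (r - 1)"
    using insert.IH[OF bounds_S] bounds_a by (intro add_mono mult_left_mono) auto
  also have "\<dots> = ?P r + q a * (?P (r - 1) - ?P r)"
    by algebra
  also have "\<dots> \<le> ?P r + p a * (?P (r - 1) - ?P r)"
    using bounds_a antimono
    by (intro add_left_mono mult_right_mono) auto
  also have "\<dots> = (1 - p a) * ?P r + p a * ?P (r - 1)"
    by algebra
  also have "\<dots> = poisson_binomial_tail (insert a S) p r"
    using poisson_binomial_tail_insert[OF insert.hyps] by simp
  finally show ?case .
qed

lemma poisson_binomial_tail_const: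
  assumes "finite S"
  shows "poisson_binomial_tail S (\<lambda>_. q) r
           = (\<Sum>j = r..card S. real (card S choose j) * q ^ j * (1 - q) ^ (card S - j))"
proof -
  have "poisson_binomial_tail S (\<lambda>_. q) r
          = (\<Sum>T | T \<subseteq> S \<and> r \<le> card T. q ^ card T * (1 - q) ^ (card S - card T))"
    unfolding poisson_binomial_tail_def
    using assms by (intro sum.cong) (auto simp: card_Diff_subset finite_subset)
  also have "\<dots> = (\<Sum>j = r..card S. \<Sum>T | T \<subseteq> S \<and> card T = j. q ^ card T * (1 - q) ^ (card S - card T))"
  proof -
    have "{T. T \<subseteq> S \<and> r \<le> card T} = (\<Union>j\<in>{r..card S}. {T. T \<subseteq> S \<and> card T = j})"
      using assms card_mono by fastforce
    then show ?thesis
      using assms by (simp only:) (rule sum.UNION_disjoint, auto)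
  qed
  also have "\<dots> = (\<Sum>j = r..card S. real (card S choose j) * q ^ j * (1 - q) ^ (card S - j))"
    using n_subsets[OF assms] by (intro sum.cong) auto
  finally show ?thesis .
qed

lemma sets_Collect_occur_exactly:
  assumes "\<And>k. k \<in> I \<Longrightarrow> A k \<in> sets M" and "finite I"
  shows "{\<omega> \<in> space M. \<forall>k\<in>I. \<omega> \<in> A k \<longleftrightarrow> k \<in> J} \<in> sets M"
proof (intro sets.sets_Collect_finite_All \<open>finite I\<close>)
  fix k assume "k \<in> I"
  then show "{\<omega> \<in> space M. \<omega> \<in> A k \<longleftrightarrow> k \<in> J} \<in> sets M"
    using assms(1)[of k] by (cases "k \<in> J") (auto simp: Collect_conj_eq Int_commute Diff_eq Compl_eq)
qed

lemma (in prob_space) prob_indep_events_occur_exactly: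
  assumes indep: "indep_events A I" and "finite I" and "J \<subseteq> I"
  shows "prob {\<omega> \<in> space M. \<forall>k\<in>I. \<omega> \<in> A k \<longleftrightarrow> k \<in> J}
           = (\<Prod>k\<in>J. prob (A k)) * (\<Prod>k\<in>I - J. 1 - prob (A k))"
proof -
  define B where "B k = (if k \<in> J then A k else space M - A k)" for k
  have events: "A k \<in> events" if "k \<in> I" for k
    using indep that by (auto simp: indep_events_def)
  have B_sigma: "B k \<in> sigma_sets (space M) {A k}" if "k \<in> I" for k
    using events[OF that] sets.sets_into_space
    by (auto simp: B_def intro: sigma_sets.Basic sigma_sets.Compl)
  have "indep_sets (\<lambda>k. sigma_sets (space M) {A k}) I"
    using indep_sets_sigma[OF indep[unfolded indep_events_def_alt]]
    by (auto simp: Int_stable_def)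
  then have prod_B: "I \<noteq> {} \<Longrightarrow> prob (\<Inter>k\<in>I. B k) = (\<Prod>k\<in>I. prob (B k))"
    using \<open>finite I\<close> B_sigma by (intro indep_setsD) auto
  have occur_exactly_eq: "{\<omega> \<in> space M. \<forall>k\<in>I. \<omega> \<in> A k \<longleftrightarrow> k \<in> J} = space M \<inter> (\<Inter>k\<in>I. B k)"
    by (auto simp: B_def)
  have "B k \<subseteq> space M" if "k \<in> I" for k
    using events[OF that] sets.sets_into_space by (auto simp: B_def)
  then have "I \<noteq> {} \<Longrightarrow> space M \<inter> (\<Inter>k\<in>I. B k) = (\<Inter>k\<in>I. B k)"
    by blast
  moreover have "(\<Prod>k\<in>I. prob (B k)) = (\<Prod>k\<in>I. if k \<in> J then prob (A k) else 1 - prob (A k))"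
    using events by (intro prod.cong) (auto simp: B_def prob_compl)
  moreover have "\<dots> = (\<Prod>k\<in>J. prob (A k)) * (\<Prod>k\<in>I - J. 1 - prob (A k))"
    using assms by (simp add: prod.If_cases Int_absorb1 Diff_eq)
  ultimately show ?thesis
    unfolding occur_exactly_eq using prod_B by (cases "I = {}") (auto simp: prob_space)
qed

lemma (in prob_space) prob_all_and_at_least_indep_events:
  assumes indep: "indep_events A (S1 \<union> S2)"
    and "finite S1" and "finite S2" and "S1 \<inter> S2 = {}"
  shows "prob {\<omega> \<in> space M. (\<forall>k\<in>S1. \<omega> \<in> A k) \<and> r \<le> card {k\<in>S2. \<omega> \<in> A k}}
           = (\<Prod>k\<in>S1. prob (A k)) * poisson_binomial_tail S2 (\<lambda>k. prob (A k)) r"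
proof -
  let ?p = "\<lambda>k. prob (A k)" and ?Ts = "{T. T \<subseteq> S2 \<and> r \<le> card T}"
  define E where "E T = {\<omega> \<in> space M. \<forall>k\<in>S1 \<union> S2. \<omega> \<in> A k \<longleftrightarrow> k \<in> S1 \<union> T}" for T
  have events: "A k \<in> events" if "k \<in> S1 \<union> S2" for k
    using indep that by (auto simp: indep_events_def)
  have E_iff: "\<omega> \<in> E T \<longleftrightarrow> \<omega> \<in> space M \<and> (\<forall>k\<in>S1. \<omega> \<in> A k) \<and> {k\<in>S2. \<omega> \<in> A k} = T"
    if "T \<subseteq> S2" for \<omega> T
    using that assms(4) by (auto simp: E_def)
  have "{\<omega> \<in> space M. (\<forall>k\<in>S1. \<omega> \<in> A k) \<and> r \<le> card {k\<in>S2. \<omega> \<in> A k}} = (\<Union>T\<in>?Ts. E T)"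
    by (auto simp: E_iff)
  moreover have "prob (\<Union>T\<in>?Ts. E T) = (\<Sum>T\<in>?Ts. prob (E T))"
  proof (rule finite_measure_finite_Union)
    show "E ` ?Ts \<subseteq> events"
      unfolding E_def using assms events by (auto intro: sets_Collect_occur_exactly)
    show "disjoint_family_on E ?Ts"
      by (auto simp: disjoint_family_on_def E_iff)
  qed (use assms in auto)
  moreover have "prob (E T) = (\<Prod>k\<in>S1. ?p k) * ((\<Prod>k\<in>T. ?p k) * (\<Prod>k\<in>S2 - T. 1 - ?p k))"
    if "T \<in> ?Ts" for T
  proof -
    have "S1 \<inter> T = {}" and "(S1 \<union> S2) - (S1 \<union> T) = S2 - T" and "finite T"
      using that assms finite_subset by auto
    then show ?thesis
      unfolding E_def using that assms
      by (subst prob_indep_events_occur_exactly) (auto simp: prod.union_disjoint)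
  qed
  ultimately show ?thesis
    by (simp add: poisson_binomial_tail_def sum_distrib_left)
qed

lemma (in prob_space) prob_all_and_at_least_indep_events_ge:
  assumes "indep_events A (S1 \<union> S2)"
    and "finite S1" and "finite S2" and "S1 \<inter> S2 = {}"
    and "0 \<le> q" and "\<And>k. k \<in> S1 \<union> S2 \<Longrightarrow> q \<le> prob (A k)"
  shows "q ^ card S1 * (\<Sum>j = r..card S2. real (card S2 choose j) * q ^ j * (1 - q) ^ (card S2 - j))
           \<le> prob {\<omega> \<in> space M. (\<forall>k\<in>S1. \<omega> \<in> A k) \<and> r \<le> card {k\<in>S2. \<omega> \<in> A k}}"
proof -
  have bounds: "0 \<le> q \<and> q \<le> prob (A k) \<and> prob (A k) \<le> 1" if "k \<in> S1 \<union> S2" for k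
    using assms(5,6) that by simp
  have "q ^ card S1 * (\<Sum>j = r..card S2. real (card S2 choose j) * q ^ j * (1 - q) ^ (card S2 - j))
          = (\<Prod>k\<in>S1. q) * poisson_binomial_tail S2 (\<lambda>_. q) r"
    using poisson_binomial_tail_const[OF assms(3)] by simp
  also have "\<dots> \<le> (\<Prod>k\<in>S1. prob (A k)) * poisson_binomial_tail S2 (\<lambda>k. prob (A k)) r"
    using bounds assms(3)
    by (intro mult_mono prod_mono poisson_binomial_tail_mono poisson_binomial_tail_nonneg prod_nonneg)
       (auto intro: order_trans)
  also have "\<dots> = prob {\<omega> \<in> space M. (\<forall>k\<in>S1. \<omega> \<in> A k) \<and> r \<le> card {k\<in>S2. \<omega> \<in> A k}}"
    using prob_all_and_at_least_indep_events[OF assms(1-4)] by simp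
  finally show ?thesis .
qed

theorem lemma4:
  fixes M :: "'a measure"
    and S1 S2 :: "nat set"
    and Y :: "nat \<Rightarrow> 'a \<Rightarrow> real ^ 'n"
    and Yhat :: "nat \<Rightarrow> real ^ 'n"
    and eps :: "nat \<Rightarrow> real"
    and \<delta> \<alpha> :: real
  assumes "prob_space M"
    and "finite S1" and "finite S2" and "S1 \<inter> S2 = {}"
    and "0 < \<delta>" and "\<delta> < 1"
    and "0 \<le> \<alpha>" and "\<alpha> \<le> 1"
    and "\<And>k. k \<in> S1 \<union> S2 \<Longrightarrow> Y k \<in> borel_measurable M"
    and "\<And>k. k \<in> S1 \<union> S2 \<Longrightarrow> eps k > 0"
    and "\<And>k. k \<in> S1 \<union> S2 \<Longrightarrow>
           measure M (cover_event M (Y k) (Yhat k) (eps k)) \<ge> 1 - \<delta>"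
    and "prob_space.indep_events M (\<lambda>k. cover_event M (Y k) (Yhat k) (eps k)) (S1 \<union> S2)"
  shows "measure M ((\<Inter>k\<in>S1. {\<omega> \<in> space M.
              indicator (cover_event M (Y k) (Yhat k) (eps k)) \<omega> = (1::real)})
           \<inter> {\<omega> \<in> space M. (\<Sum>k\<in>S2. indicator (cover_event M (Y k) (Yhat k) (eps k)) \<omega>)
                 \<ge> \<alpha> * real (card S2)})
         \<ge> (1 - \<delta>) ^ card S1 *
           (\<Sum>j = nat \<lceil>\<alpha> * real (card S2)\<rceil>..card S2.
              real (card S2 choose j) * (1 - \<delta>) ^ j * \<delta> ^ (card S2 - j))"
proof -
  interpret prob_space M by fact
  define A where "A = (\<lambda>k. cover_event M (Y k) (Yhat k) (eps k))"
  have count: "(\<Sum>k\<in>S2. indicator (A k) \<omega>) = real (card {k\<in>S2. \<omega> \<in> A k})" for \<omega>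
    using \<open>finite S2\<close> by (simp add: indicator_def Int_def)
  have "(\<Inter>k\<in>S1. {\<omega> \<in> space M. indicator (A k) \<omega> = (1::real)})
          \<inter> {\<omega> \<in> space M. (\<Sum>k\<in>S2. indicator (A k) \<omega>) \<ge> \<alpha> * real (card S2)}
        = {\<omega> \<in> space M. (\<forall>k\<in>S1. \<omega> \<in> A k) \<and> nat \<lceil>\<alpha> * real (card S2)\<rceil> \<le> card {k\<in>S2. \<omega> \<in> A k}}"
    by (auto simp: count indicator_eq_1_iff)
  moreover have "(1 - \<delta>) ^ card S1 *
           (\<Sum>j = nat \<lceil>\<alpha> * real (card S2)\<rceil>..card S2.
              real (card S2 choose j) * (1 - \<delta>) ^ j * \<delta> ^ (card S2 - j))
        \<le> prob {\<omega> \<in> space M. (\<forall>k\<in>S1. \<omega> \<in> A k) \<and> nat \<lceil>\<alpha> * real (card S2)\<rceil> \<le> card {k\<in>S2. \<omega> \<in> A k}}"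
    using prob_all_and_at_least_indep_events_ge[of A S1 S2 "1 - \<delta>"] assms
    by (simp add: A_def del: nat_ceiling_le_eq)
  ultimately show ?thesis
    unfolding A_def by simp
qed

end
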